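(* For all $r,s\ge1$, as an identity of polynomials in $q$, $$\sum_C(q-1)^{r+s-l(C)-1}=\sum_{m=0}^{\min(r-1,s-1)}\binom{r-1}{m}\binom{s-1}{m}q^{r+s-m-1},$$ where the sum runs over all cells $C$ for $(r,s)$, including the empty cell.
   Context: A cell (for given $r,s$) is a finite (possibly empty) sequence of distinct pairs $(i_1,j_1),\dots,(i_l,j_l)$ with $1\le i_k\le r$, $1\le j_k\le s$, $i_1\le\cdots\le i_l$ and $j_1\le\cdots\le j_l$; $l(C)=l$ is its length. *)

theory Defs
  imports "HOL-Computational_Algebra.Polynomial"
begin

definition is_cell :: "nat \<Rightarrow> nat \<Rightarrow> (nat \<times> nat) list \<Rightarrow> bool" where
  "is_cell r s C \<longleftrightarrow> distinct C \<and> set C \<subseteq> {1..r} \<times> {1..s}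
     \<and> sorted (map fst C) \<and> sorted (map snd C)"

definition cells :: "nat \<Rightarrow> nat \<Rightarrow> (nat \<times> nat) list set" where
  "cells r s = {C. is_cell r s C}"

end

theory Submission
  imports Defs
begin

text \<open>A cell for \<open>(r, s)\<close> either avoids the corner \<open>(r, s)\<close>, and is then a cell for
  \<open>(r - 1, s)\<close> or \<open>(r, s - 1)\<close>, or it is such a cell followed by the corner. Weighting a cell
  \<open>C\<close> by \<open>t ^ (r + s - l(C))\<close> with \<open>t = q - 1\<close>, inclusion-exclusion over the two smaller
  rectangles gives \<open>F(r, s) = q F(r - 1, s) + q F(r, s - 1) - q t F(r - 1, s - 1)\<close>, since a cell
  and its extension by the corner together contribute \<open>q\<close> times a single weight. The binomial
  sum, multiplied by \<open>t\<close>, satisfies the same recurrence by Pascal's rule applied to both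
  binomial coefficients, and both sides equal \<open>t q ^ s\<close> on the boundary \<open>r = 1\<close>.\<close>

lemma cell_componentwise_sorted:
  assumes "is_cell r s C"
  shows "sorted_wrt (\<lambda>x y. fst x \<le> fst y \<and> snd x \<le> snd y) C"
proof -
  have "sorted_wrt (\<lambda>x y. fst x \<le> fst y) C" "sorted_wrt (\<lambda>x y. snd x \<le> snd y) C"
    using assms by (auto simp: is_cell_def sorted_map)
  then show ?thesis by (induction C) auto
qed

lemma cell_comparable:
  assumes "is_cell r s C" "x \<in> set C" "y \<in> set C"
  shows "(fst x \<le> fst y \<and> snd x \<le> snd y) \<or> (fst y \<le> fst x \<and> snd y \<le> snd x)"
  using cell_componentwise_sorted[OF assms(1)] assms(2,3)
  by (induction C) auto

text \<open>The coordinate sum strictly increases along a cell and takes values in \<open>{2..r+s}\<close>.\<close>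
lemma cell_length_le:
  assumes "is_cell r s C"
  shows "length C \<le> r + s - 1"
proof -
  let ?f = "\<lambda>x::nat \<times> nat. fst x + snd x"
  have "sorted_wrt (\<lambda>x y. (fst x \<le> fst y \<and> snd x \<le> snd y) \<and> x \<noteq> y) C"
    using cell_componentwise_sorted[OF assms] assms
    by (induction C) (auto simp: is_cell_def)
  then have "sorted_wrt (\<lambda>x y. ?f x < ?f y) C"
    by (rule sorted_wrt_mono_rel[rotated]) (auto simp: prod_eq_iff)
  then have "distinct (map ?f C)"
    by (induction C) auto
  moreover have "set (map ?f C) \<subseteq> {2..r+s}"
    using assms by (auto simp: is_cell_def)
  ultimately have "card (set (map ?f C)) \<le> card {2..r+s}"
    by (intro card_mono) auto
  then show ?thesis
    using distinct_card[OF \<open>distinct (map ?f C)\<close>] by simp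
qed

lemma finite_cells: "finite (cells r s)"
proof (rule finite_subset)
  show "cells r s \<subseteq> {C. set C \<subseteq> {1..r} \<times> {1..s} \<and> length C \<le> r + s}"
    using cell_length_le by (fastforce simp: cells_def is_cell_def)
  show "finite {C. set C \<subseteq> {1..r} \<times> {1..s} \<and> length C \<le> r + s}"
    by (intro finite_lists_length_le) simp
qed

lemma cells_0 [simp]: "cells 0 s = {[]}" "cells r 0 = {[]}"
  by (auto simp: cells_def is_cell_def)

lemma cells_Int: "cells r (Suc s) \<inter> cells (Suc r) s = cells r s"
  by (auto simp: cells_def is_cell_def subset_iff) (meson le_SucI)+

lemma is_cell_snoc_corner:
  "is_cell (Suc r) (Suc s) (C @ [(Suc r, Suc s)])
     \<longleftrightarrow> is_cell (Suc r) (Suc s) C \<and> (Suc r, Suc s) \<notin> set C"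
  by (auto simp: is_cell_def sorted_append)

text \<open>A cell that uses both the last row and the last column meets them in the corner.\<close>
lemma cell_without_corner:
  assumes cell: "is_cell (Suc r) (Suc s) C" and corner: "(Suc r, Suc s) \<notin> set C"
  shows "is_cell r (Suc s) C \<or> is_cell (Suc r) s C"
proof (rule ccontr)
  assume "\<not> ?thesis"
  then have "\<not> set C \<subseteq> {1..r} \<times> {1..Suc s}" "\<not> set C \<subseteq> {1..Suc r} \<times> {1..s}"
    using cell by (auto simp: is_cell_def)
  moreover have bounds: "set C \<subseteq> {1..Suc r} \<times> {1..Suc s}"
    using cell by (simp add: is_cell_def)
  ultimately obtain x y where xy: "x \<in> set C" "fst x = Suc r" "y \<in> set C" "snd y = Suc s"
    by (auto simp: subset_iff) (metis le_SucE)+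
  moreover have "fst y \<le> Suc r" "snd x \<le> Suc s"
    using bounds xy by auto
  ultimately show False
    using cell_comparable[OF cell xy(1,3)] corner by (metis le_antisym prod.collapse)
qed

lemma cell_with_corner:
  assumes cell: "is_cell (Suc r) (Suc s) C" and corner: "(Suc r, Suc s) \<in> set C"
  shows "C = butlast C @ [(Suc r, Suc s)]"
proof -
  obtain xs ys where C: "C = xs @ (Suc r, Suc s) # ys"
    using corner by (meson split_list)
  have "ys = []"
  proof (rule ccontr)
    assume "ys \<noteq> []"
    then obtain y where y: "y \<in> set ys" by (cases ys) auto
    then have "y = (Suc r, Suc s)"
      using cell unfolding C is_cell_def by (fastforce simp: sorted_append prod_eq_iff)
    then show False
      using cell y unfolding C is_cell_def by auto
  qed
  then show ?thesis using C by simp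
qed

lemma cells_Suc_Suc:
  fixes r s :: nat
  defines "T \<equiv> cells r (Suc s) \<union> cells (Suc r) s"
  shows "cells (Suc r) (Suc s) = T \<union> (\<lambda>C. C @ [(Suc r, Suc s)]) ` T"
    and "T \<inter> (\<lambda>C. C @ [(Suc r, Suc s)]) ` T = {}"
proof -
  have T_iff: "C \<in> T \<longleftrightarrow> is_cell (Suc r) (Suc s) C \<and> (Suc r, Suc s) \<notin> set C" for C
    using cell_without_corner[of r s C]
    by (auto simp: T_def cells_def is_cell_def)
  show "T \<inter> (\<lambda>C. C @ [(Suc r, Suc s)]) ` T = {}"
    using T_iff by auto
  show "cells (Suc r) (Suc s) = T \<union> (\<lambda>C. C @ [(Suc r, Suc s)]) ` T"
  proof (intro equalityI subsetI)
    fix C assume "C \<in> cells (Suc r) (Suc s)"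
    then have cell: "is_cell (Suc r) (Suc s) C" by (simp add: cells_def)
    show "C \<in> T \<union> (\<lambda>C. C @ [(Suc r, Suc s)]) ` T"
    proof (cases "(Suc r, Suc s) \<in> set C")
      case True
      then have C: "C = butlast C @ [(Suc r, Suc s)]"
        using cell_with_corner cell by blast
      then have "butlast C \<in> T"
        using cell is_cell_snoc_corner T_iff by metis
      then show ?thesis using C by blast
    qed (use cell T_iff in blast)
  qed (use T_iff is_cell_snoc_corner in \<open>auto simp: cells_def\<close>)
qed

lemma sum_cells_Suc_Suc:
  fixes r s :: nat and f :: "(nat \<times> nat) list \<Rightarrow> 'a::ab_group_add"
  defines "g \<equiv> \<lambda>C. f C + f (C @ [(Suc r, Suc s)])"
  shows "(\<Sum>C\<in>cells (Suc r) (Suc s). f C)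
       = (\<Sum>C\<in>cells r (Suc s). g C) + (\<Sum>C\<in>cells (Suc r) s. g C) - (\<Sum>C\<in>cells r s. g C)"
proof -
  define T where "T = cells r (Suc s) \<union> cells (Suc r) s"
  have "finite T" by (simp add: T_def finite_cells)
  then have "(\<Sum>C\<in>cells (Suc r) (Suc s). f C)
      = (\<Sum>C\<in>T. f C) + (\<Sum>C\<in>(\<lambda>C. C @ [(Suc r, Suc s)]) ` T. f C)"
    using cells_Suc_Suc by (simp add: T_def sum.union_disjoint)
  also have "\<dots> = (\<Sum>C\<in>T. g C)"
    by (simp add: g_def sum.distrib sum.reindex inj_on_def)
  also have "\<dots> = (\<Sum>C\<in>cells r (Suc s). g C) + (\<Sum>C\<in>cells (Suc r) s. g C) - (\<Sum>C\<in>cells r s. g C)"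
    using sum.union_inter[OF finite_cells finite_cells, of g r "Suc s" "Suc r" s]
    by (simp add: T_def cells_Int algebra_simps)
  finally show ?thesis .
qed

text \<open>The sum over cells with weight \<open>(q - 1) ^ (r + s - l(C))\<close>; dropping the \<open>-1\<close> of the
  theorem's exponent makes the recurrence below valid also when \<open>r + s = 2\<close>.\<close>
definition cell_poly :: "nat \<Rightarrow> nat \<Rightarrow> int poly" where
  "cell_poly r s = (\<Sum>C\<in>cells r s. [:-1, 1:] ^ (r + s - length C))"

lemma cell_poly_0 [simp]: "cell_poly 0 s = [:-1, 1:] ^ s" "cell_poly r 0 = [:-1, 1:] ^ r"
  by (simp_all add: cell_poly_def)

lemma pCons_minus_one_eq: "[:-1, 1:] = [:0, 1:] - (1 :: 'a::comm_ring_1 poly)"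
  by (simp add: one_pCons)

lemma snoc_weight:
  assumes "length C \<le> n"
  shows "[:-1, 1:] ^ (Suc n - length C) + [:-1, 1:] ^ (Suc n - length (C @ [x]))
       = [:0, 1:] * ([:-1, 1:] :: int poly) ^ (n - length C)"
proof -
  have "Suc n - length C = Suc (n - length C)" "Suc n - length (C @ [x]) = n - length C"
    using assms by simp_all
  then show ?thesis
    by (simp add: pCons_minus_one_eq algebra_simps)
qed

lemma cell_poly_Suc_Suc:
  "cell_poly (Suc r) (Suc s) = [:0, 1:] * cell_poly r (Suc s) + [:0, 1:] * cell_poly (Suc r) s
     - [:0, 1:] * [:-1, 1:] * cell_poly r s"
proof -
  have step: "(\<Sum>C\<in>cells r' s'. [:-1, 1:] ^ (Suc r + Suc s - length C)
                + [:-1, 1:] ^ (Suc r + Suc s - length (C @ [(Suc r, Suc s)])))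
            = [:0, 1:] * [:-1, 1:] ^ k * cell_poly r' s'"
    if "Suc r + Suc s = r' + s' + Suc k" for r' s' k
    unfolding cell_poly_def sum_distrib_left
  proof (rule sum.cong[OF refl])
    fix C assume "C \<in> cells r' s'"
    then have "length C \<le> r' + s'"
      using cell_length_le by (fastforce simp: cells_def)
    then have "r' + s' + k - length C = k + (r' + s' - length C)"
      by simp
    then have "([:-1, 1:] :: int poly) ^ (r' + s' + k - length C)
             = [:-1, 1:] ^ k * [:-1, 1:] ^ (r' + s' - length C)"
      by (simp only: power_add)
    then show "[:-1, 1:] ^ (Suc r + Suc s - length C)
                + [:-1, 1:] ^ (Suc r + Suc s - length (C @ [(Suc r, Suc s)]))
             = [:0, 1:] * [:-1, 1:] ^ k * ([:-1, 1:] :: int poly) ^ (r' + s' - length C)"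
      using snoc_weight[of C "r' + s' + k"] \<open>length C \<le> r' + s'\<close> that
      by (simp add: mult.assoc)
  qed
  show ?thesis
    unfolding cell_poly_def[of "Suc r" "Suc s"] sum_cells_Suc_Suc
    using step[of r "Suc s" 0] step[of "Suc r" s 0] step[of r s 1] by simp
qed

lemma cell_poly_1_left: "cell_poly (Suc 0) s = [:-1, 1:] * [:0, 1:] ^ s"
  by (induction s) (simp_all add: cell_poly_Suc_Suc algebra_simps)

lemma cell_poly_1_right: "cell_poly r (Suc 0) = [:-1, 1:] * [:0, 1:] ^ r"
  by (induction r) (simp_all add: cell_poly_Suc_Suc algebra_simps)

definition binom_term :: "nat \<Rightarrow> nat \<Rightarrow> nat \<Rightarrow> int poly" where
  "binom_term a b m = of_nat (a choose m) * of_nat (b choose m) * [:0, 1:] ^ (a + b + 1 - m)"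

definition binom_poly :: "nat \<Rightarrow> nat \<Rightarrow> nat \<Rightarrow> int poly" where
  "binom_poly a b N = (\<Sum>m\<le>N. binom_term a b m)"

lemma binom_poly_eq_min: "min a b \<le> N \<Longrightarrow> binom_poly a b N = binom_poly a b (min a b)"
  unfolding binom_poly_def
  by (rule sum.mono_neutral_right) (auto simp: binom_term_def min_def split: if_splits)

lemma binom_term_0 [simp]: "binom_term a b 0 = [:0, 1:] ^ Suc (a + b)"
  by (simp add: binom_term_def)

lemma binom_poly_0 [simp]: "binom_poly 0 b N = [:0, 1:] ^ Suc b" "binom_poly a 0 N = [:0, 1:] ^ Suc a"
  by (auto simp: binom_poly_def binom_term_def atMost_atLeast0 sum.atLeast_Suc_atMost binomial_eq_0
      intro!: sum.neutral)

lemma choose_mult_choose_Suc_Suc: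
  "(Suc a choose Suc m) * (Suc b choose Suc m) + (a choose Suc m) * (b choose Suc m)
     = (a choose Suc m) * (Suc b choose Suc m) + (Suc a choose Suc m) * (b choose Suc m)
       + (a choose m) * (b choose m)"
  by (simp add: algebra_simps)

lemma binom_term_Suc_Suc:
  "binom_term (Suc a) (Suc b) (Suc m) + [:0, 1:] * [:0, 1:] * binom_term a b (Suc m)
     = [:0, 1:] * binom_term a (Suc b) (Suc m) + [:0, 1:] * binom_term (Suc a) b (Suc m)
       + [:0, 1:] * binom_term a b m"
proof (cases "m \<le> a")
  case True
  define d where "d = a + b - m"
  have exps: "Suc a + Suc b + 1 - Suc m = Suc (Suc d)" "a + Suc b + 1 - Suc m = Suc d"
    "Suc a + b + 1 - Suc m = Suc d" "a + b + 1 - Suc m = d" "a + b + 1 - m = Suc d"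
    using True by (simp_all add: d_def)
  have "(of_nat ((Suc a choose Suc m) * (Suc b choose Suc m) + (a choose Suc m) * (b choose Suc m))
        :: int poly)
      = of_nat ((a choose Suc m) * (Suc b choose Suc m) + (Suc a choose Suc m) * (b choose Suc m)
          + (a choose m) * (b choose m))"
    by (simp only: choose_mult_choose_Suc_Suc)
  then show ?thesis
    unfolding binom_term_def exps by (simp add: algebra_simps)
next
  case False
  then show ?thesis
    by (simp add: binom_term_def binomial_eq_0)
qed

lemma binom_poly_Suc_Suc:
  "binom_poly (Suc a) (Suc b) (Suc N) + [:0, 1:] * [:0, 1:] * binom_poly a b (Suc N)
     = [:0, 1:] * binom_poly a (Suc b) (Suc N) + [:0, 1:] * binom_poly (Suc a) b (Suc N)
       + [:0, 1:] * binom_poly a b N"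
proof -
  define q where "q = ([:0, 1:] :: int poly)"
  have "(\<Sum>m\<le>N. binom_term (Suc a) (Suc b) (Suc m) + q * q * binom_term a b (Suc m))
      = (\<Sum>m\<le>N. q * binom_term a (Suc b) (Suc m) + q * binom_term (Suc a) b (Suc m)
          + q * binom_term a b m)"
    unfolding q_def by (simp only: binom_term_Suc_Suc)
  then show ?thesis
    unfolding binom_poly_def sum.atMost_Suc_shift binom_term_0 q_def[symmetric]
    by (simp add: sum.distrib sum_distrib_left algebra_simps)
qed

lemma binom_poly_min_Suc_Suc:
  "binom_poly (Suc a) (Suc b) (min (Suc a) (Suc b))
     = [:0, 1:] * binom_poly a (Suc b) (min a (Suc b)) + [:0, 1:] * binom_poly (Suc a) b (min (Suc a) b)
       - [:0, 1:] * [:-1, 1:] * binom_poly a b (min a b)"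
proof -
  define q where "q = ([:0, 1:] :: int poly)"
  have "binom_poly (Suc a) (Suc b) (Suc (a + b)) + q * q * binom_poly a b (Suc (a + b))
      = q * binom_poly a (Suc b) (Suc (a + b)) + q * binom_poly (Suc a) b (Suc (a + b))
        + q * binom_poly a b (a + b)"
    unfolding q_def by (rule binom_poly_Suc_Suc)
  moreover have "binom_poly (Suc a) (Suc b) (Suc (a + b)) = binom_poly (Suc a) (Suc b) (min (Suc a) (Suc b))"
    "binom_poly a (Suc b) (Suc (a + b)) = binom_poly a (Suc b) (min a (Suc b))"
    "binom_poly (Suc a) b (Suc (a + b)) = binom_poly (Suc a) b (min (Suc a) b)"
    "binom_poly a b (Suc (a + b)) = binom_poly a b (min a b)"
    "binom_poly a b (a + b) = binom_poly a b (min a b)"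
    by (rule binom_poly_eq_min; simp)+
  ultimately show ?thesis
    unfolding pCons_minus_one_eq q_def[symmetric] by (simp add: algebra_simps)
qed

lemma cell_poly_eq_binom_poly:
  "cell_poly (Suc a) (Suc b) = [:-1, 1:] * binom_poly a b (min a b)"
proof (induction a arbitrary: b)
  case 0
  then show ?case by (simp add: cell_poly_1_left)
next
  case (Suc a)
  note outer_IH = Suc.IH
  show ?case
  proof (induction b)
    case 0
    then show ?case by (simp add: cell_poly_1_right)
  next
    case (Suc b)
    define q where "q = ([:0, 1:] :: int poly)"
    define t where "t = ([:-1, 1:] :: int poly)"
    have "cell_poly (Suc (Suc a)) (Suc (Suc b))
        = q * cell_poly (Suc a) (Suc (Suc b)) + q * cell_poly (Suc (Suc a)) (Suc b)
          - q * t * cell_poly (Suc a) (Suc b)"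
      unfolding q_def t_def by (rule cell_poly_Suc_Suc)
    also have "\<dots> = t * (q * binom_poly a (Suc b) (min a (Suc b))
        + q * binom_poly (Suc a) b (min (Suc a) b) - q * t * binom_poly a b (min a b))"
      using outer_IH[of b, folded t_def] outer_IH[of "Suc b", folded t_def] Suc.IH[folded t_def]
      by (simp add: algebra_simps)
    also have "\<dots> = t * binom_poly (Suc a) (Suc b) (min (Suc a) (Suc b))"
      using binom_poly_min_Suc_Suc[of a b, folded q_def t_def] by simp
    finally show ?case unfolding t_def .
  qed
qed

lemma cell_poly_eq_mult:
  assumes "0 < r + s"
  shows "cell_poly r s = [:-1, 1:] * (\<Sum>C\<in>cells r s. [:-1, 1:] ^ (r + s - length C - 1))"
  unfolding cell_poly_def sum_distrib_left
proof (rule sum.cong[OF refl])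
  fix C assume "C \<in> cells r s"
  then have "r + s - length C = Suc (r + s - length C - 1)"
    using cell_length_le assms by (fastforce simp: cells_def)
  then show "[:-1, 1:] ^ (r + s - length C) = [:-1, 1:] * ([:-1, 1:] :: int poly) ^ (r + s - length C - 1)"
    by (metis power_Suc)
qed

theorem mainTheorem15:
  fixes r s :: nat
  assumes "r \<ge> 1" and "s \<ge> 1"
  shows "(\<Sum>C\<in>cells r s. ([:-1, 1:] :: int poly) ^ (r + s - length C - 1))
       = (\<Sum>m = 0..min (r - 1) (s - 1).
            of_nat ((r - 1) choose m) * of_nat ((s - 1) choose m) * [:0, 1:] ^ (r + s - m - 1))"
proof -
  obtain a b where r: "r = Suc a" and s: "s = Suc b"
    using assms by (metis Suc_pred' less_eq_Suc_le One_nat_def)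
  have "[:-1, 1:] * (\<Sum>C\<in>cells r s. ([:-1, 1:] :: int poly) ^ (r + s - length C - 1))
      = [:-1, 1:] * binom_poly a b (min a b)"
    using cell_poly_eq_mult[of r s] cell_poly_eq_binom_poly[of a b] r s by simp
  then have "(\<Sum>C\<in>cells r s. ([:-1, 1:] :: int poly) ^ (r + s - length C - 1))
      = binom_poly a b (min a b)"
    by (rule mult_left_cancel[THEN iffD1, rotated]) simp
  then show ?thesis
    by (simp add: r s binom_poly_def binom_term_def atMost_atLeast0)
qed

end
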